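(* There is an absolute constant $c>0$ such that for every connected graph $G$ with $n\ge 2$ nodes and every $\epsilon\in(0,1)$, $$t_{\epsilon,1}(G)\;\ge\;\frac{1-\epsilon}{2\log 2}\,n\log n\;-\;c\,n .$$
   Context: Let $G=(V,E)$ be a finite, undirected, connected graph with $V=\{1,\dots,n\}$. The averaging process on $G$: the state vector $v(t)\in\mathbb R^n$, $t=0,1,2,\dots$, starts from a given $v(0)$; at each step $t\ge 1$ an edge $\{i,j\}\in E$ is chosen uniformly at random (independently of all previous choices) and both $v_i$ and $v_j$ are replaced by $(v_i+v_j)/2$, all other coordinates unchanged. Let $\bar v=(a,\dots,a)^T$ with $a=\frac1n\sum_i v_i(0)$. For $p,q\ge1$ and $\epsilon>0$, $t_{\epsilon,p\to q}(G)$ is the least $t\in\mathbb N$ such that for every $v(0)$ with $\|v(0)\|_p=1$ one has $\left(\mathbb E\|v(t)-\bar v\|_q^q\right)^{1/q}\le\epsilon$; $t_{\epsilon,1}=t_{\epsilon,1\to1}$. Logarithms are natural. *)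

theory Defs
  imports Complex_Main
begin

definition is_graph :: "nat \<Rightarrow> nat set set \<Rightarrow> bool" where
  "is_graph n E \<longleftrightarrow> E \<subseteq> {{i, j} | i j. i \<in> {1..n} \<and> j \<in> {1..n} \<and> i \<noteq> j}"

definition adj_rel :: "nat set set \<Rightarrow> (nat \<times> nat) set" where
  "adj_rel E = {(i, j). {i, j} \<in> E}"

definition graph_connected :: "nat \<Rightarrow> nat set set \<Rightarrow> bool" where
  "graph_connected n E \<longleftrightarrow> (\<forall>i\<in>{1..n}. \<forall>j\<in>{1..n}. (i, j) \<in> (adj_rel E)\<^sup>*)"

definition avg_step :: "nat set \<Rightarrow> (nat \<Rightarrow> real) \<Rightarrow> (nat \<Rightarrow> real)" where
  "avg_step e v = (\<lambda>k. if k \<in> e then (\<Sum>l\<in>e. v l) / 2 else v k)"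

definition run_avg :: "nat set list \<Rightarrow> (nat \<Rightarrow> real) \<Rightarrow> (nat \<Rightarrow> real)" where
  "run_avg es v0 = foldl (\<lambda>v e. avg_step e v) v0 es"

definition mean_vec :: "nat \<Rightarrow> (nat \<Rightarrow> real) \<Rightarrow> real" where
  "mean_vec n v = (\<Sum>i\<in>{1..n}. v i) / real n"

definition l1_norm :: "nat \<Rightarrow> (nat \<Rightarrow> real) \<Rightarrow> real" where
  "l1_norm n v = (\<Sum>i\<in>{1..n}. \<bar>v i\<bar>)"

text \<open>E ||v(t) - vbar||_1, the expectation over t independent uniform edge choices
  (all edge sequences of length t equally likely).\<close>
definition expected_l1_dist :: "nat \<Rightarrow> nat set set \<Rightarrow> nat \<Rightarrow> (nat \<Rightarrow> real) \<Rightarrow> real" where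
  "expected_l1_dist n E t v0 =
     (\<Sum>es\<in>{es. set es \<subseteq> E \<and> length es = t}.
        l1_norm n (\<lambda>i. run_avg es v0 i - mean_vec n v0)) / real (card E) ^ t"

definition t_eps1 :: "nat \<Rightarrow> nat set set \<Rightarrow> real \<Rightarrow> nat" where
  "t_eps1 n E \<epsilon> = (LEAST t. \<forall>v0. l1_norm n v0 = 1 \<longrightarrow> expected_l1_dist n E t v0 \<le> \<epsilon>)"

end

(*
  Run the process from the point mass at each vertex j and track the entropy of the resulting
  states. Averaging two coordinates raises an entropy by at most ln 2 times the mass at the two
  vertices, and since the product of the averaging matrices is doubly stochastic these masses sum
  to 2 over all j; hence the total entropy after t steps is at most 2 t ln 2. On the other hand a
  probability vector within l1-distance d of uniform has entropy at least (1 - d) ln n - 2 ln 2,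
  so if every starting point is eps-mixed in expectation, the expected total entropy is at least
  n (1 - eps) ln n - 2 n ln 2. Comparing the two bounds gives the theorem with c = 1.
  The least time in the definition of t_eps1 exists because the expected squared distance to the
  mean contracts geometrically, by a Poincare inequality on the connected graph.
*)
theory Submission
  imports Defs "HOL-Library.Indicator_Function"
begin

lemma is_graph_edgeE:
  assumes "is_graph n E" "e \<in> E"
  obtains a b where "e = {a, b}" "a \<noteq> b" "a \<in> {1..n}" "b \<in> {1..n}"
  using assms unfolding is_graph_def by blast

lemma is_graph_edge_card: "is_graph n E \<Longrightarrow> e \<in> E \<Longrightarrow> card e = 2 \<and> e \<subseteq> {1..n}"
  by (erule is_graph_edgeE) auto

lemma is_graph_finite:
  assumes "is_graph n E"
  shows "finite E"
proof (rule finite_subset)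
  show "E \<subseteq> Pow {1..n}"
    using is_graph_edge_card[OF assms] by blast
qed simp

lemma graph_connected_edges_nonempty:
  assumes "graph_connected n E" "n \<ge> 2"
  shows "E \<noteq> {}"
proof
  assume "E = {}"
  then have "adj_rel E = {}"
    by (simp add: adj_rel_def)
  moreover have "(1, 2) \<in> (adj_rel E)\<^sup>*"
    using assms unfolding graph_connected_def by auto
  ultimately show False
    by simp
qed

lemma avg_step_doubleton:
  "a \<noteq> b \<Longrightarrow> avg_step {a, b} v = (\<lambda>k. if k = a \<or> k = b then (v a + v b) / 2 else v k)"
  unfolding avg_step_def by (auto intro!: ext)

lemma sum_avg_step:
  fixes \<phi> :: "real \<Rightarrow> real"
  assumes "finite V" "a \<in> V" "b \<in> V" "a \<noteq> b"
  shows "(\<Sum>i\<in>V. \<phi> (avg_step {a, b} v i))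
       = (\<Sum>i\<in>V. \<phi> (v i)) - \<phi> (v a) - \<phi> (v b) + 2 * \<phi> ((v a + v b) / 2)"
proof -
  have split: "(\<Sum>i\<in>V. f i) = f a + f b + (\<Sum>i\<in>V - {a, b}. f i)" for f :: "nat \<Rightarrow> real"
    using assms by (simp add: sum.subset_diff[of "{a, b}" V] add.commute)
  have rest: "(\<Sum>i\<in>V - {a, b}. \<phi> (avg_step {a, b} v i)) = (\<Sum>i\<in>V - {a, b}. \<phi> (v i))"
    using assms by (intro sum.cong) (auto simp: avg_step_doubleton)
  have mid: "avg_step {a, b} v a = (v a + v b) / 2" "avg_step {a, b} v b = (v a + v b) / 2"
    using assms by (auto simp: avg_step_doubleton)
  show ?thesis
    unfolding split[of "\<lambda>i. \<phi> (avg_step {a, b} v i)"] split[of "\<lambda>i. \<phi> (v i)"] rest mid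
    by simp
qed

lemma run_avg_Nil [simp]: "run_avg [] v = v"
  by (simp add: run_avg_def)

lemma run_avg_Cons [simp]: "run_avg (e # es) v = run_avg es (avg_step e v)"
  by (simp add: run_avg_def)

lemma run_avg_snoc [simp]: "run_avg (es @ [e]) v = avg_step e (run_avg es v)"
  by (simp add: run_avg_def)

lemma run_avg_sum:
  assumes "\<forall>e\<in>set es. finite e"
  shows "run_avg es (\<lambda>k. \<Sum>j\<in>J. f j k) = (\<lambda>k. \<Sum>j\<in>J. run_avg es (f j) k)"
  using assms
proof (induction es arbitrary: f)
  case (Cons e es)
  have "avg_step e (\<lambda>k. \<Sum>j\<in>J. f j k) = (\<lambda>k. \<Sum>j\<in>J. avg_step e (f j) k)"
    unfolding avg_step_def by (auto intro!: ext simp: sum.swap[of _ e J] sum_divide_distrib)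
  then show ?case
    using Cons by simp
qed simp

lemma run_avg_diff_const:
  assumes "\<forall>e\<in>set es. card e = 2"
  shows "run_avg es (\<lambda>k. v k - c) = (\<lambda>k. run_avg es v k - c)"
  using assms
proof (induction es arbitrary: v)
  case (Cons e es)
  obtain a b where "e = {a, b}" "a \<noteq> b"
    using Cons.prems by (auto simp: card_2_iff)
  then have "avg_step e (\<lambda>k. v k - c) = (\<lambda>k. avg_step e v k - c)"
    by (auto simp: avg_step_doubleton intro!: ext)
  then show ?case
    using Cons by simp
qed simp

lemma run_avg_in_interval:
  assumes "\<forall>e\<in>set es. card e = 2" "\<forall>k. v k \<in> {lo..hi}"
  shows "run_avg es v k \<in> {lo..hi}"
  using assms
proof (induction es arbitrary: v)
  case (Cons e es)
  obtain a b where "e = {a, b}" "a \<noteq> b"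
    using Cons.prems by (auto simp: card_2_iff)
  moreover have "v a + v b \<in> {2 * lo..2 * hi}"
    using Cons.prems(2)[rule_format, of a] Cons.prems(2)[rule_format, of b] by auto
  ultimately have "\<forall>k. avg_step e v k \<in> {lo..hi}"
    using Cons.prems by (auto simp: avg_step_doubleton)
  then show ?case
    using Cons by simp
qed simp

lemma run_avg_indicator:
  assumes "\<forall>e\<in>set es. card e = 2 \<and> e \<subseteq> V"
  shows "run_avg es (indicator V) = (indicator V :: nat \<Rightarrow> real)"
  using assms
proof (induction es)
  case (Cons e es)
  obtain a b where "e = {a, b}" "a \<noteq> b" "a \<in> V" "b \<in> V"
    using Cons.prems by (auto simp: card_2_iff)
  then have "avg_step e (indicator V) = (indicator V :: nat \<Rightarrow> real)"
    by (auto simp: avg_step_doubleton intro!: ext)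
  then show ?case
    using Cons by simp
qed simp

lemma run_avg_column_sum:
  assumes "finite V" "\<forall>e\<in>set es. card e = 2 \<and> e \<subseteq> V" "i \<in> V"
  shows "(\<Sum>j\<in>V. run_avg es (indicator {j}) i) = (1::real)"
proof -
  have fin: "\<forall>e\<in>set es. finite e"
    using assms(2) by (auto intro: card_ge_0_finite)
  have "(\<lambda>k. \<Sum>j\<in>V. indicator {j} k) = (indicator V :: nat \<Rightarrow> real)"
    using assms(1) by (auto intro!: ext simp: indicator_def)
  then have "(\<lambda>k. \<Sum>j\<in>V. run_avg es (indicator {j}) k) = (indicator V :: nat \<Rightarrow> real)"
    using run_avg_sum[OF fin, of "\<lambda>j. indicator {j}" V] run_avg_indicator[OF assms(2)] by simp
  then show ?thesis
    using assms(3) by (metis indicator_simps(1))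
qed

definition entropy :: "nat set \<Rightarrow> (nat \<Rightarrow> real) \<Rightarrow> real" where
  "entropy V p = (\<Sum>i\<in>V. - (p i * ln (p i)))"

lemma entropy_indicator [simp]: "entropy V (indicator {j}) = 0"
  unfolding entropy_def by (intro sum.neutral) (auto simp: indicator_def)

lemma neg_xlnx_midpoint_le:
  fixes x y :: real
  assumes "0 \<le> x" "0 \<le> y"
  shows "- (2 * ((x + y) / 2 * ln ((x + y) / 2))) \<le> - (x * ln x) - y * ln y + (x + y) * ln 2"
proof (cases "x + y = 0")
  case False
  then have pos: "x + y > 0"
    using assms by simp
  have "z * ln z \<le> z * ln (x + y)" if "0 \<le> z" "z \<le> x + y" for z
    using that by (cases "z = 0") (auto intro!: mult_left_mono ln_mono)
  then have "x * ln x \<le> x * ln (x + y)" "y * ln y \<le> y * ln (x + y)"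
    using assms by auto
  moreover have "2 * ((x + y) / 2 * ln ((x + y) / 2)) = (x + y) * ln (x + y) - (x + y) * ln 2"
    using pos by (simp add: ln_div field_simps)
  ultimately show ?thesis
    by (simp add: algebra_simps)
qed (use assms in \<open>simp add: add_nonneg_eq_0_iff\<close>)

lemma entropy_avg_step_le:
  assumes "finite V" "a \<in> V" "b \<in> V" "a \<noteq> b" "0 \<le> p a" "0 \<le> p b"
  shows "entropy V (avg_step {a, b} p) \<le> entropy V p + ln 2 * (p a + p b)"
  using neg_xlnx_midpoint_le[OF assms(5,6)]
  unfolding entropy_def sum_avg_step[OF assms(1-4), of "\<lambda>x. - (x * ln x)"] by (simp add: algebra_simps)

lemma sum_entropy_run_avg_le:
  assumes "finite V" "\<forall>e\<in>set es. card e = 2 \<and> e \<subseteq> V"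
  shows "(\<Sum>j\<in>V. entropy V (run_avg es (indicator {j}))) \<le> 2 * ln 2 * length es"
  using assms(2)
proof (induction es rule: rev_induct)
  case (snoc e es)
  obtain a b where e: "e = {a, b}" "a \<noteq> b" "a \<in> V" "b \<in> V"
    using snoc.prems by (auto simp: card_2_iff)
  have es: "\<forall>e\<in>set es. card e = 2 \<and> e \<subseteq> V"
    using snoc.prems by simp
  have nonneg: "0 \<le> run_avg es (indicator {j}) k" for j k
    using run_avg_in_interval[of es "indicator {j}" 0 1 k] es by (auto simp: indicator_def)
  have "(\<Sum>j\<in>V. entropy V (run_avg (es @ [e]) (indicator {j})))
      \<le> (\<Sum>j\<in>V. entropy V (run_avg es (indicator {j}))
           + ln 2 * (run_avg es (indicator {j}) a + run_avg es (indicator {j}) b))"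
    unfolding run_avg_snoc e(1) using assms(1) e nonneg by (intro sum_mono entropy_avg_step_le) auto
  also have "\<dots> = (\<Sum>j\<in>V. entropy V (run_avg es (indicator {j})))
      + ln 2 * ((\<Sum>j\<in>V. run_avg es (indicator {j}) a) + (\<Sum>j\<in>V. run_avg es (indicator {j}) b))"
    by (simp add: sum.distrib sum_distrib_left distrib_left)
  also have "\<dots> = (\<Sum>j\<in>V. entropy V (run_avg es (indicator {j}))) + 2 * ln 2"
    using run_avg_column_sum[OF assms(1) es] e by simp
  also have "\<dots> \<le> 2 * ln 2 * length (es @ [e])"
    using snoc.IH es by (simp add: algebra_simps)
  finally show ?case .
qed simp

lemma neg_xlnx_ge:
  fixes p :: real and n :: nat
  assumes n: "n \<ge> 1" and p: "0 \<le> p" "p \<le> 1"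
  shows "(1 / n - \<bar>p - 1 / n\<bar>) * ln n - 2 * ln 2 / n \<le> - (p * ln p)"
proof -
  have npos: "real n > 0" and lnn: "ln n \<ge> 0" and ln2: "0 \<le> 2 * ln 2 / real n"
    using n by auto
  consider "p = 0" | "0 < p" "p \<le> 1 / n" | "1 / n < p" "p < 2 / n" | "2 / n \<le> p"
    using p by linarith
  then show ?thesis
  proof cases
    case 1
    then show ?thesis
      using ln2 by simp
  next
    case 2
    then have "ln n \<le> - ln p"
      using npos ln_mono[of n "1 / p"] by (simp add: ln_div field_simps)
    then have "p * ln n \<le> - (p * ln p)"
      using 2 mult_left_mono[of "ln n" "- ln p" p] by simp
    moreover have "(1 / n - \<bar>p - 1 / n\<bar>) * ln n = p * ln n"
      using 2 by simp
    ultimately show ?thesis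
      using ln2 by linarith
  next
    case 3
    then have "ln n - ln 2 \<le> - ln p"
      using npos ln_mono[of p "2 / n"] by (simp add: ln_div)
    then have "p * ln n - p * ln 2 \<le> - (p * ln p)"
      using 3 npos mult_left_mono[of "ln n - ln 2" "- ln p" p] by (simp add: right_diff_distrib)
    moreover have "(2 / n - p) * ln n \<le> p * ln n"
      using 3 lnn by (intro mult_right_mono) auto
    moreover have "p * ln 2 \<le> 2 * ln 2 / n"
      using 3 mult_right_mono[of p "2 / n" "ln 2"] by simp
    moreover have "1 / n - \<bar>p - 1 / n\<bar> = 2 / n - p"
      using 3 by simp
    ultimately show ?thesis
      by simp
  next
    case 4
    then have "0 < p"
      using npos by (auto intro: order_less_le_trans[of 0 "2 / n"])
    then have "0 \<le> - (p * ln p)"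
      using p by (simp add: mult_nonneg_nonpos)
    moreover have "(1 / n - \<bar>p - 1 / n\<bar>) * ln n \<le> 0"
      using 4 lnn npos by (intro mult_nonpos_nonneg) (auto simp: abs_if)
    ultimately show ?thesis
      using ln2 by linarith
  qed
qed

lemma entropy_ge_l1_dist_uniform:
  assumes "card V \<ge> 1" "\<forall>i. 0 \<le> p i \<and> p i \<le> 1"
  shows "(1 - (\<Sum>i\<in>V. \<bar>p i - 1 / card V\<bar>)) * ln (card V) - 2 * ln 2 \<le> entropy V p"
proof -
  have "(\<Sum>i\<in>V. (1 / card V - \<bar>p i - 1 / card V\<bar>) * ln (card V) - 2 * ln 2 / card V)
      \<le> entropy V p"
    unfolding entropy_def using assms by (intro sum_mono neg_xlnx_ge) auto
  moreover have "(\<Sum>i\<in>V. (1 / card V - \<bar>p i - 1 / card V\<bar>) * ln (card V) - 2 * ln 2 / card V)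
      = (1 - (\<Sum>i\<in>V. \<bar>p i - 1 / card V\<bar>)) * ln (card V) - 2 * ln 2"
    using assms(1) by (simp add: sum_subtractf sum_distrib_right[symmetric] left_diff_distrib)
  ultimately show ?thesis
    by simp
qed

definition seq_mean :: "'e set \<Rightarrow> nat \<Rightarrow> ('e list \<Rightarrow> real) \<Rightarrow> real" where
  "seq_mean E t f = (\<Sum>es\<in>{es. set es \<subseteq> E \<and> length es = t}. f es) / real (card E) ^ t"

lemma expected_l1_dist_eq_seq_mean:
  "expected_l1_dist n E t v0 = seq_mean E t (\<lambda>es. l1_norm n (\<lambda>i. run_avg es v0 i - mean_vec n v0))"
  by (simp add: expected_l1_dist_def seq_mean_def)

lemma seq_mean_const:
  assumes "finite E" "E \<noteq> {}"
  shows "seq_mean E t (\<lambda>_. c) = c"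
  using assms by (simp add: seq_mean_def card_lists_length_eq)

lemma seq_mean_mono:
  assumes "\<And>es. set es \<subseteq> E \<Longrightarrow> length es = t \<Longrightarrow> f es \<le> g es"
  shows "seq_mean E t f \<le> seq_mean E t g"
  unfolding seq_mean_def using assms by (intro divide_right_mono sum_mono) auto

lemma seq_mean_add: "seq_mean E t (\<lambda>es. f es + g es) = seq_mean E t f + seq_mean E t g"
  by (simp add: seq_mean_def sum.distrib add_divide_distrib)

lemma seq_mean_cmult: "seq_mean E t (\<lambda>es. c * f es) = c * seq_mean E t f"
  by (simp add: seq_mean_def sum_distrib_left)

lemma seq_mean_sum: "seq_mean E t (\<lambda>es. \<Sum>j\<in>J. f j es) = (\<Sum>j\<in>J. seq_mean E t (f j))"
  by (simp add: seq_mean_def sum.swap[of _ J] sum_divide_distrib)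

lemma seq_mean_Suc:
  assumes "finite E"
  shows "seq_mean E (Suc t) f = (\<Sum>e\<in>E. seq_mean E t (\<lambda>es. f (e # es))) / card E"
proof -
  let ?L = "{es. set es \<subseteq> E \<and> length es = t}"
  have "inj_on (\<lambda>(es, e). e # es) (?L \<times> E)"
    by (auto simp: inj_on_def)
  then have "(\<Sum>es\<in>{es. set es \<subseteq> E \<and> length es = Suc t}. f es) = (\<Sum>(es, e)\<in>?L \<times> E. f (e # es))"
    unfolding lists_length_Suc_eq by (subst sum.reindex) (simp_all add: case_prod_beta)
  also have "\<dots> = (\<Sum>e\<in>E. \<Sum>es\<in>?L. f (e # es))"
    by (simp add: sum.cartesian_product[symmetric] sum.swap[of _ ?L])
  finally show ?thesis
    by (simp add: seq_mean_def sum_divide_distrib field_simps)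
qed

lemma mean_vec_indicator: "j \<in> {1..n} \<Longrightarrow> mean_vec n (indicator {j}) = 1 / n"
  by (simp add: mean_vec_def indicator_def of_bool_def)

lemma l1_norm_indicator: "j \<in> {1..n} \<Longrightarrow> l1_norm n (indicator {j}) = 1"
  by (simp add: l1_norm_def indicator_def of_bool_def)

lemma is_graph_run_edges:
  "is_graph n E \<Longrightarrow> set es \<subseteq> E \<Longrightarrow> \<forall>e\<in>set es. card e = 2 \<and> e \<subseteq> {1..n}"
  using is_graph_edge_card by blast

lemma sum_l1_dist_uniform_ge:
  assumes V: "finite V" "V \<noteq> {}" and edges: "\<forall>e\<in>set es. card e = 2 \<and> e \<subseteq> V"
  shows "card V * ln (card V) - 2 * card V * ln 2 - 2 * ln 2 * length es
      \<le> ln (card V) * (\<Sum>j\<in>V. \<Sum>i\<in>V. \<bar>run_avg es (indicator {j}) i - 1 / card V\<bar>)"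
proof -
  define \<delta> where "\<delta> j = (\<Sum>i\<in>V. \<bar>run_avg es (indicator {j}) i - 1 / card V\<bar>)" for j
  have "(\<Sum>j\<in>V. (1 - \<delta> j) * ln (card V) - 2 * ln 2) \<le> (\<Sum>j\<in>V. entropy V (run_avg es (indicator {j})))"
  proof (intro sum_mono)
    fix j
    have "\<forall>i. 0 \<le> run_avg es (indicator {j}) i \<and> run_avg es (indicator {j}) i \<le> 1"
      using run_avg_in_interval[of es "indicator {j}" 0 1] edges by (auto simp: indicator_def)
    then show "(1 - \<delta> j) * ln (card V) - 2 * ln 2 \<le> entropy V (run_avg es (indicator {j}))"
      unfolding \<delta>_def using V by (intro entropy_ge_l1_dist_uniform) (auto simp: Suc_le_eq card_gt_0_iff)
  qed
  also have "\<dots> \<le> 2 * ln 2 * length es"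
    using sum_entropy_run_avg_le[OF V(1) edges] .
  moreover have "(\<Sum>j\<in>V. (1 - \<delta> j) * ln (card V) - 2 * ln 2)
      = card V * ln (card V) - 2 * card V * ln 2 - ln (card V) * (\<Sum>j\<in>V. \<delta> j)"
    by (simp add: sum_subtractf sum_distrib_left sum_distrib_right sum.distrib algebra_simps)
  ultimately show ?thesis
    unfolding \<delta>_def by linarith
qed

lemma mixing_time_lower_bound:
  assumes g: "is_graph n E" and n: "n \<ge> 2" and ne: "E \<noteq> {}"
    and close: "\<forall>j\<in>{1..n}. expected_l1_dist n E t (indicator {j}) \<le> \<epsilon>"
  shows "(1 - \<epsilon>) / (2 * ln 2) * n * ln n - n \<le> t"
proof -
  define \<delta> where "\<delta> j es = l1_norm n (\<lambda>i. run_avg es (indicator {j}) i - 1 / n)" for j es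
  have per_seq: "n * ln n - 2 * n * ln 2 - 2 * ln 2 * t \<le> ln n * (\<Sum>j\<in>{1..n}. \<delta> j es)"
    if "set es \<subseteq> E" "length es = t" for es
    using sum_l1_dist_uniform_ge[of "{1..n}" es] is_graph_run_edges[OF g] n that
    by (simp add: \<delta>_def l1_norm_def)
  have "n * ln n - 2 * n * ln 2 - 2 * ln 2 * t \<le> ln n * (\<Sum>j\<in>{1..n}. seq_mean E t (\<delta> j))"
    using seq_mean_mono[of E t "\<lambda>_. n * ln n - 2 * n * ln 2 - 2 * ln 2 * t", OF per_seq]
    by (simp add: seq_mean_const[OF is_graph_finite[OF g] ne] seq_mean_cmult seq_mean_sum)
  also have "\<dots> \<le> ln n * (n * \<epsilon>)"
  proof (intro mult_left_mono)
    have "seq_mean E t (\<delta> j) \<le> \<epsilon>" if "j \<in> {1..n}" for j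
      using close that by (simp add: expected_l1_dist_eq_seq_mean mean_vec_indicator \<delta>_def[abs_def])
    then show "(\<Sum>j\<in>{1..n}. seq_mean E t (\<delta> j)) \<le> n * \<epsilon>"
      using sum_mono[of "{1..n}" "\<lambda>j. seq_mean E t (\<delta> j)" "\<lambda>_. \<epsilon>"] by simp
  qed (use n in simp)
  finally show ?thesis
    by (simp add: field_simps)
qed

definition sum_sq :: "nat set \<Rightarrow> (nat \<Rightarrow> real) \<Rightarrow> real" where
  "sum_sq V w = (\<Sum>i\<in>V. (w i)\<^sup>2)"

lemma sum_sq_avg_step:
  assumes "finite V" "a \<in> V" "b \<in> V" "a \<noteq> b"
  shows "sum_sq V (avg_step {a, b} w) = sum_sq V w - (w a - w b)\<^sup>2 / 2"
  unfolding sum_sq_def sum_avg_step[OF assms, of "\<lambda>x. x\<^sup>2"] by (simp add: power2_eq_square field_simps)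

lemma sum_avg_step_eq:
  assumes "finite V" "a \<in> V" "b \<in> V" "a \<noteq> b"
  shows "(\<Sum>i\<in>V. avg_step {a, b} w i) = (\<Sum>i\<in>V. w i)"
  using sum_avg_step[OF assms, of "\<lambda>x. x" w] by (simp add: field_simps)

lemma sum_sq_centered_pairs:
  assumes "finite V" "(\<Sum>i\<in>V. w i) = 0"
  shows "(\<Sum>a\<in>V. \<Sum>b\<in>V. (w a - w b)\<^sup>2) = 2 * card V * sum_sq V w"
proof -
  have "(\<Sum>a\<in>V. \<Sum>b\<in>V. (w a - w b)\<^sup>2)
      = (\<Sum>a\<in>V. card V * (w a)\<^sup>2 + sum_sq V w - 2 * w a * (\<Sum>b\<in>V. w b))"
    by (simp add: power2_diff sum.distrib sum_subtractf sum_distrib_left sum_sq_def mult.assoc)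
  also have "\<dots> = 2 * card V * sum_sq V w"
    using assms(2) by (simp add: sum.distrib sum_distrib_left[symmetric] sum_sq_def)
  finally show ?thesis .
qed

lemma relpow_diff_le:
  fixes w :: "'a \<Rightarrow> real"
  assumes "(a, b) \<in> R ^^ k" "\<And>c d. (c, d) \<in> R \<Longrightarrow> \<bar>w c - w d\<bar> \<le> D"
  shows "\<bar>w a - w b\<bar> \<le> k * D"
  using assms(1)
proof (induction k arbitrary: b)
  case (Suc k)
  then obtain c where "(a, c) \<in> R ^^ k" "(c, b) \<in> R"
    by auto
  then have "\<bar>w a - w c\<bar> \<le> k * D" "\<bar>w c - w b\<bar> \<le> D"
    using Suc.IH assms(2) by auto
  then show ?case
    by (simp add: algebra_simps)
qed simp

lemma sum_sq_avg_step_le: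
  assumes "finite V" "card e = 2" "e \<subseteq> V"
  shows "sum_sq V (avg_step e w) \<le> sum_sq V w"
proof -
  obtain a b where "e = {a, b}" "a \<noteq> b"
    using assms(2) by (auto simp: card_2_iff)
  then show ?thesis
    using assms sum_sq_avg_step[of V a b w] by simp
qed

text \<open>Along a walk of length at most \<open>K\<close> every difference \<open>w a - w b\<close> is at most \<open>K\<close> times the
  largest difference across an edge, and that is bounded by the one-step decrease of the sum of
  squares.\<close>
lemma sum_sq_le_walk_length:
  assumes V: "finite V" and edges: "\<forall>e\<in>E. card e = 2 \<and> e \<subseteq> V"
    and walks: "\<And>a b. a \<in> V \<Longrightarrow> b \<in> V \<Longrightarrow> \<exists>k\<le>K. (a, b) \<in> adj_rel E ^^ k"
    and w: "(\<Sum>i\<in>V. w i) = 0"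
  shows "sum_sq V w \<le> card V * K\<^sup>2 * (\<Sum>e\<in>E. sum_sq V w - sum_sq V (avg_step e w))"
proof -
  define S where "S = (\<Sum>e\<in>E. sum_sq V w - sum_sq V (avg_step e w))"
  have S_nonneg: "S \<ge> 0"
    unfolding S_def using V edges by (intro sum_nonneg) (simp add: sum_sq_avg_step_le)
  have edge: "\<bar>w c - w d\<bar> \<le> sqrt (2 * S)" if cd: "(c, d) \<in> adj_rel E" for c d
  proof -
    have E: "{c, d} \<in> E"
      using cd by (simp add: adj_rel_def)
    then have "card {c, d} = 2" "{c, d} \<subseteq> V"
      using edges by auto
    then have "c \<noteq> d" "c \<in> V" "d \<in> V"
      by (auto split: if_splits)
    then have "(w c - w d)\<^sup>2 / 2 = sum_sq V w - sum_sq V (avg_step {c, d} w)"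
      using sum_sq_avg_step[OF V, of c d w] by simp
    also have "\<dots> \<le> S"
      unfolding S_def using E V edges by (intro member_le_sum finite_subset[of E "Pow V"])
        (auto simp: sum_sq_avg_step_le)
    finally show ?thesis
      by (intro real_le_rsqrt) simp
  qed
  have pair: "(w a - w b)\<^sup>2 \<le> K\<^sup>2 * (2 * S)" if ab: "a \<in> V" "b \<in> V" for a b
  proof -
    obtain k where "k \<le> K" and walk: "(a, b) \<in> adj_rel E ^^ k"
      using walks[OF ab] by blast
    have "\<bar>w a - w b\<bar> \<le> k * sqrt (2 * S)"
      using walk edge by (rule relpow_diff_le)
    also have "\<dots> \<le> K * sqrt (2 * S)"
      using \<open>k \<le> K\<close> S_nonneg by (intro mult_right_mono) auto
    finally have "\<bar>w a - w b\<bar>\<^sup>2 \<le> (K * sqrt (2 * S))\<^sup>2"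
      by (intro power_mono) auto
    then show ?thesis
      using S_nonneg by (simp add: power_mult_distrib)
  qed
  have "2 * card V * sum_sq V w \<le> (\<Sum>a\<in>V. \<Sum>b\<in>V. K\<^sup>2 * (2 * S))"
    unfolding sum_sq_centered_pairs[OF V w, symmetric] using pair by (intro sum_mono) auto
  also have "\<dots> = 2 * card V * (card V * K\<^sup>2 * S)"
    by simp
  finally show ?thesis
    unfolding S_def[symmetric] by (cases "card V = 0") (simp_all add: sum_sq_def V)
qed

lemma poincare_inequality:
  assumes V: "finite V" and edges: "\<forall>e\<in>E. card e = 2 \<and> e \<subseteq> V"
    and connected: "V \<times> V \<subseteq> (adj_rel E)\<^sup>*"
  obtains C where "C \<ge> 1" "\<And>w. (\<Sum>i\<in>V. w i) = 0 \<Longrightarrow>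
      sum_sq V w \<le> C * (\<Sum>e\<in>E. sum_sq V w - sum_sq V (avg_step e w))"
proof -
  define K where "K = card (adj_rel E)"
  have "adj_rel E \<subseteq> V \<times> V"
    using edges by (auto simp: adj_rel_def)
  then have "finite (adj_rel E)"
    by (rule finite_subset) (simp add: V)
  then have walks: "\<exists>k\<le>K. (a, b) \<in> adj_rel E ^^ k" if "a \<in> V" "b \<in> V" for a b
    using connected that rtrancl_finite_eq_relpow unfolding K_def by blast
  have "sum_sq V w \<le> (card V * K\<^sup>2 + 1) * (\<Sum>e\<in>E. sum_sq V w - sum_sq V (avg_step e w))"
    if w: "(\<Sum>i\<in>V. w i) = 0" for w
  proof -
    have "0 \<le> (\<Sum>e\<in>E. sum_sq V w - sum_sq V (avg_step e w))"
      using V edges by (intro sum_nonneg) (simp add: sum_sq_avg_step_le)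
    then show ?thesis
      using sum_sq_le_walk_length[OF V edges walks w] by (simp add: algebra_simps)
  qed
  then show ?thesis
    by (intro that[of "card V * K\<^sup>2 + 1"]) auto
qed

lemma seq_mean_run_avg_contract:
  assumes "finite E" "0 \<le> \<rho>"
    and invariant: "\<And>e w. e \<in> E \<Longrightarrow> P w \<Longrightarrow> P (avg_step e w)"
    and contract: "\<And>w. P w \<Longrightarrow> (\<Sum>e\<in>E. \<Phi> (avg_step e w)) / card E \<le> \<rho> * \<Phi> w"
    and "P w"
  shows "seq_mean E t (\<lambda>es. \<Phi> (run_avg es w)) \<le> \<rho> ^ t * \<Phi> w"
  using \<open>P w\<close>
proof (induction t arbitrary: w)
  case 0
  have "{es. set es \<subseteq> E \<and> length es = 0} = {[]}"
    by auto
  then show ?case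
    by (simp add: seq_mean_def)
next
  case (Suc t)
  have "seq_mean E (Suc t) (\<lambda>es. \<Phi> (run_avg es w))
      = (\<Sum>e\<in>E. seq_mean E t (\<lambda>es. \<Phi> (run_avg es (avg_step e w)))) / card E"
    using assms(1) by (simp add: seq_mean_Suc)
  also have "\<dots> \<le> (\<Sum>e\<in>E. \<rho> ^ t * \<Phi> (avg_step e w)) / card E"
    using Suc invariant by (intro divide_right_mono sum_mono) auto
  also have "\<dots> = \<rho> ^ t * ((\<Sum>e\<in>E. \<Phi> (avg_step e w)) / card E)"
    by (simp add: sum_distrib_left)
  also have "\<dots> \<le> \<rho> ^ t * (\<rho> * \<Phi> w)"
    using contract[OF Suc.prems] assms(2) by (intro mult_left_mono) auto
  finally show ?case
    by (simp add: mult_ac)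
qed

lemma sum_abs_le_sum_sq:
  fixes a :: real
  assumes "finite V" "a > 0"
  shows "(\<Sum>i\<in>V. \<bar>x i\<bar>) \<le> sum_sq V x / (2 * a) + card V * a / 2"
proof -
  have "\<bar>y\<bar> \<le> y\<^sup>2 / (2 * a) + a / 2" for y :: real
  proof -
    have "2 * a * \<bar>y\<bar> \<le> y\<^sup>2 + a\<^sup>2"
      using sum_squares_bound[of "\<bar>y\<bar>" a] by (simp add: power2_abs algebra_simps)
    then show ?thesis
      using assms(2) by (simp add: field_simps power2_eq_square)
  qed
  then have "(\<Sum>i\<in>V. \<bar>x i\<bar>) \<le> (\<Sum>i\<in>V. (x i)\<^sup>2 / (2 * a) + a / 2)"
    by (intro sum_mono)
  also have "\<dots> = sum_sq V x / (2 * a) + card V * a / 2"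
    by (simp add: sum_sq_def sum.distrib sum_divide_distrib)
  finally show ?thesis .
qed

lemma seq_mean_sum_sq_decay:
  assumes g: "is_graph n E" and c: "graph_connected n E" and n: "n \<ge> 2"
  obtains \<rho> where "0 \<le> \<rho>" "\<rho> < 1" "\<And>w t. (\<Sum>i\<in>{1..n}. w i) = 0 \<Longrightarrow>
      seq_mean E t (\<lambda>es. sum_sq {1..n} (run_avg es w)) \<le> \<rho> ^ t * sum_sq {1..n} w"
proof -
  let ?V = "{1..n}"
  have fin_E: "finite E" and edges: "\<forall>e\<in>E. card e = 2 \<and> e \<subseteq> ?V"
    using is_graph_finite[OF g] is_graph_edge_card[OF g] by auto
  have card_E: "real (card E) \<ge> 1"
    using fin_E graph_connected_edges_nonempty[OF c n] by (simp add: Suc_leI card_gt_0_iff)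
  obtain C where C: "C \<ge> 1" and poincare: "\<And>w. (\<Sum>i\<in>?V. w i) = 0 \<Longrightarrow>
      sum_sq ?V w \<le> C * (\<Sum>e\<in>E. sum_sq ?V w - sum_sq ?V (avg_step e w))"
    using poincare_inequality[of ?V E] edges c unfolding graph_connected_def by blast
  define \<rho> where "\<rho> = 1 - 1 / (C * card E)"
  have "C * card E \<ge> 1"
    using C card_E by (metis mult_mono' mult_1 zero_le_one)
  then have \<rho>: "0 \<le> \<rho>" "\<rho> < 1"
    unfolding \<rho>_def by auto
  have invariant: "(\<Sum>i\<in>?V. avg_step e w i) = 0" if "e \<in> E" "(\<Sum>i\<in>?V. w i) = 0" for e w
    using that by (auto elim!: is_graph_edgeE[OF g] simp: sum_avg_step_eq)
  have contract: "(\<Sum>e\<in>E. sum_sq ?V (avg_step e w)) / card E \<le> \<rho> * sum_sq ?V w"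
    if "(\<Sum>i\<in>?V. w i) = 0" for w
  proof -
    have "sum_sq ?V w / C \<le> (\<Sum>e\<in>E. sum_sq ?V w - sum_sq ?V (avg_step e w))"
      using poincare[OF that] C by (simp add: field_simps)
    then show ?thesis
      using card_E C by (simp add: \<rho>_def sum_subtractf field_simps)
  qed
  have "seq_mean E t (\<lambda>es. sum_sq ?V (run_avg es w)) \<le> \<rho> ^ t * sum_sq ?V w"
    if "(\<Sum>i\<in>?V. w i) = 0" for w t
    using fin_E \<rho>(1) invariant contract that by (rule seq_mean_run_avg_contract)
  with \<rho> show ?thesis
    by (rule that)
qed

lemma sum_sq_centered_le:
  assumes "n \<ge> 1" "l1_norm n v0 = 1"
  shows "sum_sq {1..n} (\<lambda>i. v0 i - mean_vec n v0) \<le> 4 * n"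
proof -
  have entry: "\<bar>v0 i\<bar> \<le> 1" if "i \<in> {1..n}" for i
    using assms(2) that unfolding l1_norm_def by (metis finite_atLeastAtMost member_le_sum abs_ge_zero)
  have mean: "\<bar>mean_vec n v0\<bar> \<le> 1"
    using assms sum_abs[of v0 "{1..n}"] unfolding l1_norm_def mean_vec_def by (simp add: abs_div field_simps)
  have "(v0 i - mean_vec n v0)\<^sup>2 \<le> 2\<^sup>2" if "i \<in> {1..n}" for i
    using entry[OF that] mean by (intro abs_le_square_iff[THEN iffD1]) arith
  then show ?thesis
    unfolding sum_sq_def using sum_mono[of "{1..n}" "\<lambda>i. (v0 i - mean_vec n v0)\<^sup>2" "\<lambda>_. 2\<^sup>2"] by simp
qed

lemma expected_l1_dist_le_seq_mean_sum_sq: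
  assumes g: "is_graph n E" and ne: "E \<noteq> {}" and n: "n \<ge> 1" and \<epsilon>: "\<epsilon> > 0"
  shows "expected_l1_dist n E t v0 \<le>
    n / (2 * \<epsilon>) * seq_mean E t (\<lambda>es. sum_sq {1..n} (run_avg es (\<lambda>i. v0 i - mean_vec n v0))) + \<epsilon> / 2"
    (is "_ \<le> _ * seq_mean E t (\<lambda>es. sum_sq _ (run_avg es ?w)) + _")
proof -
  have "expected_l1_dist n E t v0 = seq_mean E t (\<lambda>es. \<Sum>i\<in>{1..n}. \<bar>run_avg es ?w i\<bar>)"
    unfolding expected_l1_dist_eq_seq_mean l1_norm_def seq_mean_def
    using is_graph_edge_card[OF g] by (intro arg_cong[where f = "\<lambda>x. x / _"] sum.cong refl)
      (simp add: run_avg_diff_const subset_iff)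
  also have "\<dots> \<le> seq_mean E t (\<lambda>es. n / (2 * \<epsilon>) * sum_sq {1..n} (run_avg es ?w) + \<epsilon> / 2)"
    using sum_abs_le_sum_sq[of "{1..n}" "\<epsilon> / n"] \<epsilon> n by (intro seq_mean_mono) (simp add: field_simps)
  also have "\<dots> = n / (2 * \<epsilon>) * seq_mean E t (\<lambda>es. sum_sq {1..n} (run_avg es ?w)) + \<epsilon> / 2"
    by (simp only: seq_mean_add seq_mean_cmult seq_mean_const[OF is_graph_finite[OF g] ne])
  finally show ?thesis .
qed

lemma finite_mixing_time:
  assumes g: "is_graph n E" and c: "graph_connected n E" and n: "n \<ge> 2" and \<epsilon>: "\<epsilon> > 0"
  shows "\<exists>t. \<forall>v0. l1_norm n v0 = 1 \<longrightarrow> expected_l1_dist n E t v0 \<le> \<epsilon>"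
proof -
  obtain \<rho> where \<rho>: "0 \<le> \<rho>" "\<rho> < 1" and decay: "\<And>w t. (\<Sum>i\<in>{1..n}. w i) = 0 \<Longrightarrow>
      seq_mean E t (\<lambda>es. sum_sq {1..n} (run_avg es w)) \<le> \<rho> ^ t * sum_sq {1..n} w"
    using seq_mean_sum_sq_decay[OF g c n] by blast
  have npos: "real n > 0"
    using n by simp
  obtain t where t: "\<rho> ^ t < \<epsilon>\<^sup>2 / (4 * n\<^sup>2)"
    using real_arch_pow_inv[OF _ \<rho>(2), of "\<epsilon>\<^sup>2 / (4 * n\<^sup>2)"] \<epsilon> npos by auto
  have "expected_l1_dist n E t v0 \<le> \<epsilon>" if v0: "l1_norm n v0 = 1" for v0
  proof -
    define w where "w i = v0 i - mean_vec n v0" for i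
    have "(\<Sum>i\<in>{1..n}. w i) = 0"
      unfolding w_def mean_vec_def using npos by (simp add: sum_subtractf)
    then have "seq_mean E t (\<lambda>es. sum_sq {1..n} (run_avg es w)) \<le> \<rho> ^ t * sum_sq {1..n} w"
      by (rule decay)
    also have "\<dots> \<le> \<rho> ^ t * (4 * n)"
      using sum_sq_centered_le[OF _ v0] n \<rho>(1) unfolding w_def[abs_def] by (intro mult_left_mono) auto
    finally have "n / (2 * \<epsilon>) * seq_mean E t (\<lambda>es. sum_sq {1..n} (run_avg es w)) + \<epsilon> / 2
        \<le> n / (2 * \<epsilon>) * (\<rho> ^ t * (4 * n)) + \<epsilon> / 2"
      using \<epsilon> by (intro add_right_mono mult_left_mono) auto
    also have "\<dots> \<le> \<epsilon>"
      using t \<epsilon> npos by (simp add: field_simps power2_eq_square)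
    finally show ?thesis
      using expected_l1_dist_le_seq_mean_sum_sq[OF g graph_connected_edges_nonempty[OF c n] _ \<epsilon>, of t v0] n
      unfolding w_def[abs_def] by simp
  qed
  then show ?thesis
    by blast
qed

theorem theorem1:
  "\<exists>c>0. \<forall>n::nat. \<forall>E. n \<ge> 2 \<longrightarrow> is_graph n E \<longrightarrow> graph_connected n E \<longrightarrow>
     (\<forall>\<epsilon>::real. 0 < \<epsilon> \<and> \<epsilon> < 1 \<longrightarrow>
        real (t_eps1 n E \<epsilon>) \<ge> (1 - \<epsilon>) / (2 * ln 2) * real n * ln (real n) - c * real n)"
proof (intro exI[of _ 1] conjI allI impI)
  fix n :: nat and E :: "nat set set" and \<epsilon> :: real
  assume n: "n \<ge> 2" and g: "is_graph n E" and c: "graph_connected n E" and \<epsilon>: "0 < \<epsilon> \<and> \<epsilon> < 1"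
  have "\<forall>v0. l1_norm n v0 = 1 \<longrightarrow> expected_l1_dist n E (t_eps1 n E \<epsilon>) v0 \<le> \<epsilon>"
    unfolding t_eps1_def by (rule LeastI_ex) (use finite_mixing_time[OF g c n] \<epsilon> in blast)
  then have "\<forall>j\<in>{1..n}. expected_l1_dist n E (t_eps1 n E \<epsilon>) (indicator {j}) \<le> \<epsilon>"
    using l1_norm_indicator by blast
  from mixing_time_lower_bound[OF g n graph_connected_edges_nonempty[OF c n] this]
  show "(1 - \<epsilon>) / (2 * ln 2) * real n * ln (real n) - 1 * real n \<le> real (t_eps1 n E \<epsilon>)"
    by simp
qed simp

end
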